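(* Let $\mathcal{A}=(Q,\delta,I,F)$ be a complete Büchi automaton with $n=|Q|$, let $\mathcal{B}_S$ be the automaton produced from $\mathcal{A}$ by Schewe's rank-based complementation construction (described in the context), and let $\mathcal{B}_S^{\mathit{de}}$ be the automaton obtained from the same construction in which every occurrence of $Q_2$ is replaced by $$Q_2^{\mathit{de}} = Q_2\setminus\{(S,O,f,i)\in Q_2 \mid \exists p,q\in S:\ p\preceq_{\mathit{de}} q \wedge f(p)>\lceil f(q)\rceil\},$$ where $\lceil x\rceil$ denotes the smallest even number $\ge x$. Then $\mathcal{L}(\mathcal{B}_S^{\mathit{de}})=\mathcal{L}(\mathcal{B}_S)$.
   Context: Fix a finite nonempty alphabet $\Sigma$. A Büchi automaton (BA) is $\mathcal{A}=(Q,\delta,I,F)$ with finite state set $Q$, transition function $\delta:Q\times\Sigma\to 2^Q$, initial states $I$ and accepting states $F$; it is complete if $\delta(q,a)\neq\emptyset$ for all $q,a$. We write $\delta(P,a)=\bigcup_{p\in P}\delta(p,a)$. A run from $q$ on an infinite word $\alpha=\alpha_0\alpha_1\cdots$ is a sequence $\rho_0\rho_1\cdots$ with $\rho_0=q$ and $\rho_{i+1}\in\delta(\rho_i,\alpha_i)$; it is accepting if some state of $F$ occurs infinitely often. $\mathcal{L}(\mathcal{A})$ is the set of infinite words having an accepting run from some initial state. Delayed simulation: in the simulation game from $(p_0,r_0)$, in round $i$ Spoiler picks a transition $p_i\xrightarrow{\alpha_i}p_{i+1}$ and Duplicator answers with $r_i\xrightarrow{\alpha_i}r_{i+1}$ on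 the same symbol; a Duplicator strategy is a map $\sigma$ with $\sigma(r,p\xrightarrow{a}p')\in\delta(r,a)$ (no lookahead). Duplicator wins the delayed game if for all $i$, $p_i\in F$ implies $r_k\in F$ for some $k\ge i$. The (maximal) delayed simulation $\preceq_{\mathit{de}}$ is given by $p\preceq_{\mathit{de}}r$ iff Duplicator has a winning strategy from $(p,r)$. Schewe's construction. A ranking is $f:Q\to\{0,1,\dots,2n\}$ with $f(q)$ even for $q\in F$; $\mathrm{rank}(f)=\max_q f(q)$. For $S\subseteq Q$, $f$ is $S$-tight if (i) $\mathrm{rank}(f)=r$ is odd, (ii) $\{f(s)\mid s\in S\}\supseteq\{1,3,\dots,r\}$, (iii) $\{f(q)\mid q\notin S\}=\{0\}$; $\mathcal{T}$ is the set of $Q$-tight rankings. $\mathcal{B}_S=(Q',\delta',I',F')$: $Q'=Q_1\cup Q_2$, $Q_1=2^Q$, $Q_2=\{(S,O,f,i)\in 2^Q\times2^Q\times\mathcal{T}\times\{0,2,\dots,2n-2\}\mid f \text{ is } S\text{-tight},\ O\subseteq S\cap f^{-1}(i)\}$; $I'=\{I\}$; $\delta'=\delta_1\cup\delta_2\cup\delta_3$ with $\delta_1(S,a)=\{\delta(S,a)\}$; $\delta_2(S,a)=\{(S',\emptyset,f,0)\in Q_2\mid S'=\delta(S,a), f \text{ is } S'\text{-tight}\}$; and $(S',O',f',i')\in\delta_3((S,O,f,i),a)$ iff $(S',O',f',i')\in Q_2$, $S'=\delta(S,a)$, $f'(q')\le f(q)$ for all $q\in S$, $q'\in\delta(q,a)$,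 $\mathrm{rank}(f)=\mathrm{rank}(f')$, $f'$ is $S'$-tight, and either ($O=\emptyset$, $i'=(i+2)\bmod(\mathrm{rank}(f')+1)$, $O'=f'^{-1}(i')$) or ($O\ne\emptyset$, $i'=i$, $O'=\delta(O,a)\cap f'^{-1}(i)$); $F'=\{\emptyset\}\cup\{(S,\emptyset,f,i)\in Q_2\}$. *)

theory Defs
  imports Main
begin

text \<open>States of the input automaton form a finite type 'q
  (so Q = UNIV and n = card (UNIV :: 'q set)). The complement automaton has states of an
  infinite type, hence languages are defined for arbitrary state types.\<close>

record ('q, 'a) ba =
  trans :: "'q \<Rightarrow> 'a \<Rightarrow> 'q set"
  init  :: "'q set"
  acc   :: "'q set"

definition complete :: "('q, 'a) ba \<Rightarrow> bool" where
  "complete A \<longleftrightarrow> (\<forall>q a. trans A q a \<noteq> {})"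

definition trans_set :: "('q, 'a) ba \<Rightarrow> 'q set \<Rightarrow> 'a \<Rightarrow> 'q set" where
  "trans_set A P a = (\<Union>p\<in>P. trans A p a)"

definition is_run :: "('q, 'a) ba \<Rightarrow> 'q \<Rightarrow> (nat \<Rightarrow> 'a) \<Rightarrow> (nat \<Rightarrow> 'q) \<Rightarrow> bool" where
  "is_run A q w \<rho> \<longleftrightarrow> \<rho> 0 = q \<and> (\<forall>i. \<rho> (Suc i) \<in> trans A (\<rho> i) (w i))"

definition accepting_run :: "('q, 'a) ba \<Rightarrow> (nat \<Rightarrow> 'q) \<Rightarrow> bool" where
  "accepting_run A \<rho> \<longleftrightarrow> (\<exists>s\<in>acc A. infinite {i. \<rho> i = s})"

definition lang :: "('q, 'a) ba \<Rightarrow> (nat \<Rightarrow> 'a) set" where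
  "lang A = {w. \<exists>q\<in>init A. \<exists>\<rho>. is_run A q w \<rho> \<and> accepting_run A \<rho>}"

text \<open>A Duplicator strategy maps Duplicator's current state r and Spoiler's
  transition (p, a, p') to a successor of r under a (no lookahead).\<close>

definition valid_strategy :: "('q, 'a) ba \<Rightarrow> ('q \<Rightarrow> 'q \<times> 'a \<times> 'q \<Rightarrow> 'q) \<Rightarrow> bool" where
  "valid_strategy A \<sigma> \<longleftrightarrow>
     (\<forall>r p a p'. p' \<in> trans A p a \<longrightarrow> \<sigma> r (p, a, p') \<in> trans A r a)"

primrec dup_play ::
  "('q \<Rightarrow> 'q \<times> 'a \<times> 'q \<Rightarrow> 'q) \<Rightarrow> 'q \<Rightarrow> (nat \<Rightarrow> 'a) \<Rightarrow> (nat \<Rightarrow> 'q) \<Rightarrow> nat \<Rightarrow> 'q" where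
  "dup_play \<sigma> r0 \<alpha> ps 0 = r0"
| "dup_play \<sigma> r0 \<alpha> ps (Suc i) = \<sigma> (dup_play \<sigma> r0 \<alpha> ps i) (ps i, \<alpha> i, ps (Suc i))"

definition de_sim :: "('q, 'a) ba \<Rightarrow> 'q \<Rightarrow> 'q \<Rightarrow> bool" where
  "de_sim A p r \<longleftrightarrow>
     (\<exists>\<sigma>. valid_strategy A \<sigma> \<and>
        (\<forall>\<alpha> ps. is_run A p \<alpha> ps \<longrightarrow>
           (\<forall>i. ps i \<in> acc A \<longrightarrow> (\<exists>k\<ge>i. dup_play \<sigma> r \<alpha> ps k \<in> acc A))))"

datatype 'q sstate = Q1st "'q set" | Q2st "'q set" "'q set" "'q \<Rightarrow> nat" nat

definition is_ranking :: "('q::finite, 'a) ba \<Rightarrow> ('q \<Rightarrow> nat) \<Rightarrow> bool" where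
  "is_ranking A f \<longleftrightarrow> (\<forall>q. f q \<le> 2 * card (UNIV :: 'q set)) \<and> (\<forall>q\<in>acc A. even (f q))"

definition rank :: "('q::finite \<Rightarrow> nat) \<Rightarrow> nat" where
  "rank f = Max (range f)"

text \<open>Condition (iii) is read as: f q = 0 for every q outside S.\<close>
definition tight :: "'q::finite set \<Rightarrow> ('q \<Rightarrow> nat) \<Rightarrow> bool" where
  "tight S f \<longleftrightarrow> odd (rank f)
     \<and> (\<forall>j. odd j \<and> j \<le> rank f \<longrightarrow> j \<in> f ` S)
     \<and> (\<forall>q. q \<notin> S \<longrightarrow> f q = 0)"

definition tight_rankings :: "('q::finite, 'a) ba \<Rightarrow> ('q \<Rightarrow> nat) set" where
  "tight_rankings A = {f. is_ranking A f \<and> tight UNIV f}"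

definition Q2 :: "('q::finite, 'a) ba \<Rightarrow> ('q set \<times> 'q set \<times> ('q \<Rightarrow> nat) \<times> nat) set" where
  "Q2 A = {(S, Ob, f, i). f \<in> tight_rankings A \<and> even i \<and> i \<le> 2 * card (UNIV :: 'q set) - 2
            \<and> tight S f \<and> Ob \<subseteq> S \<inter> f -` {i}}"

definition schewe_trans ::
  "('q::finite, 'a) ba \<Rightarrow> ('q set \<times> 'q set \<times> ('q \<Rightarrow> nat) \<times> nat) set
   \<Rightarrow> 'q sstate \<Rightarrow> 'a \<Rightarrow> 'q sstate set" where
  "schewe_trans A QQ st a = (case st of
     Q1st S \<Rightarrow>
       {Q1st (trans_set A S a)}
       \<union> {Q2st S' {} f 0 | S' f. (S', {}, f, 0) \<in> QQ \<and> S' = trans_set A S a \<and> tight S' f}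
   | Q2st S Ob f i \<Rightarrow>
       {Q2st S' Ob' f' i' | S' Ob' f' i'.
          (S', Ob', f', i') \<in> QQ \<and> S' = trans_set A S a
          \<and> (\<forall>q\<in>S. \<forall>q'\<in>trans A q a. f' q' \<le> f q)
          \<and> rank f = rank f' \<and> tight S' f'
          \<and> ((Ob = {} \<and> i' = (i + 2) mod (rank f' + 1) \<and> Ob' = S' \<inter> f' -` {i'})
             \<or> (Ob \<noteq> {} \<and> i' = i \<and> Ob' = trans_set A Ob a \<inter> f' -` {i}))})"

definition schewe_gen ::
  "('q::finite, 'a) ba \<Rightarrow> ('q set \<times> 'q set \<times> ('q \<Rightarrow> nat) \<times> nat) set
   \<Rightarrow> ('q sstate, 'a) ba" where
  "schewe_gen A QQ =
     \<lparr> trans = schewe_trans A QQ,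
       init = {Q1st (init A)},
       acc = {Q1st {}} \<union> {Q2st S {} f i | S f i. (S, {}, f, i) \<in> QQ} \<rparr>"

definition schewe :: "('q::finite, 'a) ba \<Rightarrow> ('q sstate, 'a) ba" where
  "schewe A = schewe_gen A (Q2 A)"

definition ceil_even :: "nat \<Rightarrow> nat" where
  "ceil_even x = (if even x then x else x + 1)"

definition Q2_de :: "('q::finite, 'a) ba \<Rightarrow> ('q set \<times> 'q set \<times> ('q \<Rightarrow> nat) \<times> nat) set" where
  "Q2_de A = Q2 A - {(S, Ob, f, i) \<in> Q2 A.
                        \<exists>p\<in>S. \<exists>q\<in>S. de_sim A p q \<and> f p > ceil_even (f q)}"

definition schewe_de :: "('q::finite, 'a) ba \<Rightarrow> ('q sstate, 'a) ba" where
  "schewe_de A = schewe_gen A (Q2_de A)"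

end

theory Submission
  imports Defs "HOL-Library.Infinite_Set"
begin

(* Since Q2_de is a subset of Q2, every run of B_S^de is a run of B_S.
  Conversely, take an accepting run of B_S on w. If it never leaves Q1 it visits the
  empty set infinitely often and is also a run of B_S^de. Otherwise it enters Q2 at
  some position j0, and the rankings it carries from then on bound the rank of the run
  DAG of A on w from level j0: the DAG is pruned alternately of vertices with only
  finitely many descendants and of vertices without accepting descendants, and the rank
  of a vertex is the stage at which it is pruned. These DAG ranks form level rankings
  that are eventually tight with a fixed odd rank, and the run of B_S guided by them,
  with the usual breakpoint construction, is accepting. It only uses states of Q2_de
  because delayed simulation p <= q implies rank p <= ceil (rank q), that is, for odd a,
  rank p >= a implies rank q >= a. Inductively, if rank p >= a + 2 but rank q < a + 2,
  then from some depth on all descendants of q have rank at most a, while Spoiler can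
  follow a path from p of rank at least a that visits F beyond that depth. Duplicator's
  answers have rank at least a by induction, hence exactly a, which is odd; so they
  avoid F and Duplicator loses the delayed game. *)

lemma le_rank: "f q \<le> rank f"
  unfolding rank_def by simp

lemma rank_in_range: "\<exists>q. f q = rank f"
  unfolding rank_def
  by (metis (mono_tags) Max_in finite_UNIV finite_imageI imageE image_is_empty UNIV_not_empty)

lemma eventually_sequentially_from: "eventually P sequentially \<Longrightarrow> \<exists>J\<ge>m. \<forall>j\<ge>J. P j"
  unfolding eventually_sequentially by (metis max.cobounded1 max.cobounded2 order_trans)

lemma ex_uniform_witness:
  fixes P :: "nat \<Rightarrow> 'b::finite \<Rightarrow> bool"
  assumes "\<And>k. \<exists>x. P k x" and "\<And>k k' x. P k' x \<Longrightarrow> k \<le> k' \<Longrightarrow> P k x"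
  shows "\<exists>x. \<forall>k. P k x"
proof (rule ccontr)
  assume "\<not> ?thesis"
  then obtain K where K: "\<And>x. \<not> P (K x) x" by metis
  obtain x where "P (Max (range K)) x" using assms(1) by blast
  then have "P (K x) x" using assms(2) by simp
  then show False using K by blast
qed

section \<open>The run DAG\<close>

primrec reach_level :: "('q, 'a) ba \<Rightarrow> (nat \<Rightarrow> 'a) \<Rightarrow> nat \<Rightarrow> 'q set" where
  "reach_level A w 0 = init A"
| "reach_level A w (Suc j) = trans_set A (reach_level A w j) (w j)"

locale run_dag =
  fixes A :: "('q::finite, 'a) ba" and w :: "nat \<Rightarrow> 'a" and j0 :: nat
begin

abbreviation level :: "nat \<Rightarrow> 'q set" where
  "level \<equiv> reach_level A w"

definition V :: "(nat \<times> 'q) set" where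
  "V = {(j, q). j0 \<le> j \<and> q \<in> level j}"

inductive reach :: "(nat \<times> 'q) set \<Rightarrow> nat \<Rightarrow> 'q \<Rightarrow> nat \<Rightarrow> 'q \<Rightarrow> bool" for G where
  reach_refl: "(j, q) \<in> G \<Longrightarrow> reach G j q j q"
| reach_step: "reach G j q l u \<Longrightarrow> u' \<in> trans A u (w l) \<Longrightarrow> (Suc l, u') \<in> G \<Longrightarrow> reach G j q (Suc l) u'"

definition inf_path :: "(nat \<times> 'q) set \<Rightarrow> nat \<Rightarrow> (nat \<Rightarrow> 'q) \<Rightarrow> bool" where
  "inf_path G j \<pi> \<longleftrightarrow> (\<forall>k. (j + k, \<pi> k) \<in> G \<and> \<pi> (Suc k) \<in> trans A (\<pi> k) (w (j + k)))"

definition has_inf_path :: "(nat \<times> 'q) set \<Rightarrow> nat \<Rightarrow> 'q \<Rightarrow> bool" where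
  "has_inf_path G j q \<longleftrightarrow> (\<exists>\<pi>. \<pi> 0 = q \<and> inf_path G j \<pi>)"

definition acc_free :: "(nat \<times> 'q) set \<Rightarrow> nat \<Rightarrow> 'q \<Rightarrow> bool" where
  "acc_free G j q \<longleftrightarrow> (\<forall>l u. reach G j q l u \<longrightarrow> u \<notin> acc A)"

lemma V_succ: "(j, q) \<in> V \<Longrightarrow> q' \<in> trans A q (w j) \<Longrightarrow> (Suc j, q') \<in> V"
  unfolding V_def by (auto simp: trans_set_def)

lemma in_V: "j0 \<le> j \<Longrightarrow> q \<in> level j \<Longrightarrow> (j, q) \<in> V"
  unfolding V_def by simp

lemma reach_endpoints: "reach G j q l u \<Longrightarrow> (j, q) \<in> G \<and> (l, u) \<in> G \<and> j \<le> l"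
  by (induction rule: reach.induct) auto

lemma reach_mono: "reach G j q l u \<Longrightarrow> G \<subseteq> H \<Longrightarrow> reach H j q l u"
  by (induction rule: reach.induct) (auto intro: reach.intros)

lemma reach_trans: "reach G l u l' u' \<Longrightarrow> reach G j q l u \<Longrightarrow> reach G j q l' u'"
  by (induction rule: reach.induct) (auto intro: reach.intros)

lemma reach_Cons:
  "(j, q) \<in> G \<Longrightarrow> q' \<in> trans A q (w j) \<Longrightarrow> reach G (Suc j) q' l u \<Longrightarrow> reach G j q l u"
  by (meson reach_endpoints reach.intros reach_trans)

lemma reach_prefix: "reach G j q l u \<Longrightarrow> j \<le> l' \<Longrightarrow> l' \<le> l \<Longrightarrow> \<exists>u'. reach G j q l' u'"
proof (induction rule: reach.induct)
  case (reach_refl j q) then show ?case by (auto intro: reach.intros)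
next
  case (reach_step j q l u u')
  then show ?case by (cases "l' = Suc l") (auto intro: reach.intros)
qed

lemma reach_first_step:
  "reach G j q l u \<Longrightarrow> j < l \<Longrightarrow> \<exists>s\<in>trans A q (w j). reach G (Suc j) s l u"
proof (induction rule: reach.induct)
  case (reach_refl j q) then show ?case by simp
next
  case (reach_step j q l u u')
  show ?case
  proof (cases "j < l")
    case True
    then show ?thesis using reach_step by (auto intro: reach.intros)
  next
    case False
    then have "l = j" using reach_endpoints[OF reach_step(1)] by simp
    with reach_step(1) have "u = q" by (cases rule: reach.cases) (auto dest: reach_endpoints)
    then show ?thesis using reach_step \<open>l = j\<close> by (auto intro: reach.intros)
  qed
qed

lemma inf_path_suffix: "inf_path G j \<pi> \<Longrightarrow> inf_path G (j + t) (\<lambda>k. \<pi> (t + k))"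
  unfolding inf_path_def by (simp add: add.assoc)

lemma inf_path_reach: "inf_path G j \<pi> \<Longrightarrow> reach G j (\<pi> 0) (j + k) (\<pi> k)"
proof (induction k)
  case 0 then show ?case unfolding inf_path_def by (metis add_0_right reach_refl)
next
  case (Suc k) then show ?case unfolding inf_path_def by (metis add_Suc_right reach_step)
qed

lemma inf_path_mono: "inf_path G j \<pi> \<Longrightarrow> G \<subseteq> H \<Longrightarrow> inf_path H j \<pi>"
  unfolding inf_path_def by blast

lemma inf_path_Cons:
  "inf_path G (Suc j) \<pi> \<Longrightarrow> (j, q) \<in> G \<Longrightarrow> \<pi> 0 \<in> trans A q (w j) \<Longrightarrow> inf_path G j (case_nat q \<pi>)"
  unfolding inf_path_def by (auto split: nat.splits)

lemma reach_inf_path_append: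
  "reach G j q l u \<Longrightarrow> inf_path G l \<pi>' \<Longrightarrow> \<pi>' 0 = u
   \<Longrightarrow> \<exists>\<pi>. \<pi> 0 = q \<and> inf_path G j \<pi> \<and> (\<forall>k. \<pi> (l - j + k) = \<pi>' k)"
proof (induction arbitrary: \<pi>' rule: reach.induct)
  case (reach_refl j q) then show ?case by auto
next
  case (reach_step j q l u u' \<pi>')
  have jl: "j \<le> l" and "(l, u) \<in> G" using reach_endpoints[OF reach_step(1)] by simp_all
  then have "inf_path G l (case_nat u \<pi>')" using inf_path_Cons reach_step by auto
  then obtain \<pi> where \<pi>: "\<pi> 0 = q" "inf_path G j \<pi>" "\<forall>k. \<pi> (l - j + k) = case_nat u \<pi>' k"
    using reach_step.IH[of "case_nat u \<pi>'"] by auto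
  have "\<pi> (Suc l - j + k) = \<pi>' k" for k
    using \<pi>(3)[rule_format, of "Suc k"] jl by (simp add: Suc_diff_le)
  then show ?case using \<pi> by auto
qed

lemma inf_path_V_iff_run:
  "inf_path V j \<pi> \<longleftrightarrow> (j, \<pi> 0) \<in> V \<and> is_run A (\<pi> 0) (\<lambda>k. w (j + k)) \<pi>"
proof
  assume "(j, \<pi> 0) \<in> V \<and> is_run A (\<pi> 0) (\<lambda>k. w (j + k)) \<pi>"
  then have "(j + k, \<pi> k) \<in> V" for k
    by (induction k) (auto simp: is_run_def intro: V_succ)
  then show "inf_path V j \<pi>"
    using \<open>_ \<and> _\<close> unfolding inf_path_def is_run_def by simp
qed (auto simp: inf_path_def is_run_def dest: spec[of _ 0])

lemma inf_path_V_D: "inf_path V j \<pi> \<Longrightarrow> j0 \<le> j + k \<and> \<pi> k \<in> level (j + k)"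
  unfolding inf_path_def V_def by auto

lemma konig:
  assumes "\<And>k. \<exists>u. reach G j q (j + k) u"
  shows "has_inf_path G j q"
proof -
  define X where "X = {(l, u). \<forall>k. \<exists>u'. reach G l u (l + k) u'}"
  have succ_X: "\<exists>u'. u' \<in> trans A u (w l) \<and> (Suc l, u') \<in> X" if "(l, u) \<in> X" for l u
  proof -
    let ?P = "\<lambda>k s. s \<in> trans A u (w l) \<and> (\<exists>u''. reach G (Suc l) s (Suc l + k) u'')"
    have "\<exists>s. ?P k s" for k
    proof -
      have "\<forall>k. \<exists>u'. reach G l u (l + k) u'" using that unfolding X_def by simp
      then obtain u'' where "reach G l u (l + Suc k) u''" by blast
      then show ?thesis using reach_first_step by fastforce
    qed
    moreover have "?P k s" if "?P k' s" "k \<le> k'" for k k' s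
      using that reach_prefix[of G "Suc l" s "Suc l + k'" _ "Suc l + k"] by auto
    ultimately obtain s where "\<forall>k. ?P k s" using ex_uniform_witness[of ?P] by blast
    then show ?thesis unfolding X_def by auto
  qed
  define nxt where "nxt l u = (SOME u'. u' \<in> trans A u (w l) \<and> (Suc l, u') \<in> X)" for l u
  define \<pi> where "\<pi> = rec_nat q (\<lambda>k v. nxt (j + k) v)"
  have \<pi>_0: "\<pi> 0 = q" and \<pi>_Suc: "\<pi> (Suc k) = nxt (j + k) (\<pi> k)" for k
    unfolding \<pi>_def by simp_all
  have in_X: "(j + k, \<pi> k) \<in> X" for k
  proof (induction k)
    case 0 then show ?case using assms unfolding \<pi>_0 X_def by simp
  next
    case (Suc k)
    then show ?case unfolding \<pi>_Suc nxt_def using someI_ex[OF succ_X[OF Suc]] by simp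
  qed
  have "\<pi> (Suc k) \<in> trans A (\<pi> k) (w (j + k))" for k
    unfolding \<pi>_Suc nxt_def using someI_ex[OF succ_X[OF in_X[of k]]] by simp
  moreover have "(j + k, \<pi> k) \<in> G" for k
    using in_X[of k] unfolding X_def using reach_endpoints by fastforce
  ultimately show ?thesis unfolding has_inf_path_def inf_path_def using \<pi>_0 by blast
qed

lemma inf_path_through_layers:
  assumes nonempty: "\<And>d. X d \<noteq> {}"
    and pred: "\<And>d u. u \<in> X (Suc d) \<Longrightarrow> \<exists>p\<in>X d. u \<in> trans A p (w (J + d))"
    and layer: "\<And>d u. u \<in> X d \<Longrightarrow> (J + d, u) \<in> G"
  shows "\<exists>\<pi>. inf_path G J \<pi>"
proof -
  have "\<exists>x. reach G J x (J + d) u" if "u \<in> X d" for d u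
    using that
  proof (induction d arbitrary: u)
    case 0 then show ?case using layer[of u 0] by (auto intro: reach_refl)
  next
    case (Suc d)
    then obtain p where p: "p \<in> X d" "u \<in> trans A p (w (J + d))" using pred by blast
    then obtain x where "reach G J x (J + d) p" using Suc.IH by blast
    then show ?case using reach_step[OF _ p(2) layer[OF Suc.prems, simplified]] by auto
  qed
  then have "\<exists>x u. reach G J x (J + d) u" for d using nonempty by blast
  moreover have "\<exists>u. reach G J x (J + d) u" if "\<exists>u. reach G J x (J + d') u" "d \<le> d'" for d d' x
    using that reach_prefix[of G J x "J + d'" _ "J + d"] by auto
  ultimately obtain x where "\<forall>d. \<exists>u. reach G J x (J + d) u"
    using ex_uniform_witness[where P = "\<lambda>d x. \<exists>u. reach G J x (J + d) u"] by blast
  then show ?thesis using konig unfolding has_inf_path_def by blast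
qed

primrec pruned :: "nat \<Rightarrow> (nat \<times> 'q) set" where
  "pruned 0 = V"
| "pruned (Suc m) = (if even m then {(j, q) \<in> pruned m. has_inf_path (pruned m) j q}
                     else {(j, q) \<in> pruned m. \<not> acc_free (pruned m) j q})"

declare pruned.simps(2) [simp del]

lemma pruned_Suc_even:
  "even m \<Longrightarrow> (j, q) \<in> pruned (Suc m) \<longleftrightarrow> (j, q) \<in> pruned m \<and> has_inf_path (pruned m) j q"
  by (simp add: pruned.simps(2))

lemma pruned_Suc_odd:
  "odd m \<Longrightarrow> (j, q) \<in> pruned (Suc m) \<longleftrightarrow> (j, q) \<in> pruned m \<and> \<not> acc_free (pruned m) j q"
  by (simp add: pruned.simps(2))

lemma pruned_Suc_subset: "pruned (Suc m) \<subseteq> pruned m"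
  by (auto simp: pruned.simps(2))

lemma pruned_antimono: "m \<le> m' \<Longrightarrow> pruned m' \<subseteq> pruned m"
  by (rule lift_Suc_antimono_le[of pruned, OF pruned_Suc_subset])

lemma pruned_subset_V: "pruned m \<subseteq> V"
  using pruned_antimono[of 0 m] by simp

lemma pruned_pred_closed:
  assumes "(j, q) \<in> V" "q' \<in> trans A q (w j)" "(Suc j, q') \<in> pruned m"
  shows "(j, q) \<in> pruned m"
  using assms
proof (induction m)
  case 0 then show ?case by simp
next
  case (Suc m)
  have q_in: "(j, q) \<in> pruned m" using Suc pruned_Suc_subset by blast
  show ?case
  proof (cases "even m")
    case True
    then obtain \<pi> where "\<pi> 0 = q'" "inf_path (pruned m) (Suc j) \<pi>"
      using Suc.prems(3) by (auto simp: has_inf_path_def pruned_Suc_even)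
    then have "inf_path (pruned m) j (case_nat q \<pi>)"
      using inf_path_Cons q_in Suc.prems(2) by simp
    then have "has_inf_path (pruned m) j q"
      unfolding has_inf_path_def by (intro exI[of _ "case_nat q \<pi>"]) simp
    then show ?thesis using True q_in by (simp add: pruned_Suc_even)
  next
    case False
    then obtain l u where "reach (pruned m) (Suc j) q' l u" "u \<in> acc A"
      using Suc.prems(3) by (auto simp: acc_free_def pruned_Suc_odd)
    then have "\<not> acc_free (pruned m) j q"
      using reach_Cons[OF q_in Suc.prems(2)] unfolding acc_free_def by blast
    then show ?thesis using False q_in by (simp add: pruned_Suc_odd)
  qed
qed

lemma reach_V_pruned: "reach V j q l u \<Longrightarrow> (l, u) \<in> pruned m \<Longrightarrow> reach (pruned m) j q l u"
proof (induction rule: reach.induct)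
  case (reach_refl j q) then show ?case by (simp add: reach.reach_refl)
next
  case (reach_step j q l u u')
  have "(l, u) \<in> pruned m"
    using pruned_pred_closed reach_endpoints[OF reach_step(1)] reach_step by blast
  then show ?case using reach_step by (auto intro: reach.intros)
qed

lemma has_inf_path_pruned_odd: "odd m \<Longrightarrow> (j, q) \<in> pruned m \<Longrightarrow> has_inf_path (pruned m) j q"
proof -
  assume "odd m" "(j, q) \<in> pruned m"
  then obtain p where m: "m = Suc p" "even p" by (cases m) auto
  then have "has_inf_path (pruned p) j q"
    using \<open>(j, q) \<in> pruned m\<close> by (simp add: pruned_Suc_even)
  then obtain \<pi> where \<pi>: "\<pi> 0 = q" "inf_path (pruned p) j \<pi>"
    unfolding has_inf_path_def by blast
  have "has_inf_path (pruned p) (j + k) (\<pi> k)" for k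
    using inf_path_suffix[OF \<pi>(2), of k] unfolding has_inf_path_def
    by (intro exI[of _ "\<lambda>i. \<pi> (k + i)"]) simp
  then have "inf_path (pruned m) j \<pi>"
    using \<pi>(2) m unfolding inf_path_def by (simp add: pruned_Suc_even)
  then show ?thesis using \<pi>(1) unfolding has_inf_path_def by blast
qed

end

text \<open>The ranking g carried by a run of the complement automaton, read along the run
  DAG from position j0 on.\<close>
locale ranked_run_dag = run_dag A w j0 for A :: "('q::finite, 'a) ba" and w j0 +
  fixes g :: "nat \<Rightarrow> 'q \<Rightarrow> nat"
  assumes complete: "complete A"
    and level_j0_nonempty: "level j0 \<noteq> {}"
    and g_antimono: "\<And>j q q'. (j, q) \<in> V \<Longrightarrow> q' \<in> trans A q (w j) \<Longrightarrow> g (Suc j) q' \<le> g j q"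
    and g_even_acc: "\<And>j q. j0 \<le> j \<Longrightarrow> q \<in> acc A \<Longrightarrow> even (g j q)"
    and g_bounded: "\<And>j q. j0 \<le> j \<Longrightarrow> g j q \<le> 2 * card (UNIV :: 'q set)"
    and g_const_path_odd: "\<And>j \<pi> c. inf_path V j \<pi> \<Longrightarrow> (\<And>k. g (j + k) (\<pi> k) = c) \<Longrightarrow> odd c"
begin

definition dag_rank :: "nat \<Rightarrow> 'q \<Rightarrow> nat" where
  "dag_rank j q = (LEAST m. (j, q) \<notin> pruned (Suc m))"

lemma reach_g_le: "reach G j q l u \<Longrightarrow> G \<subseteq> V \<Longrightarrow> g l u \<le> g j q"
proof (induction rule: reach.induct)
  case (reach_refl j q) then show ?case by simp
next
  case (reach_step j q l u u')
  have "(l, u) \<in> V" using reach_endpoints[OF reach_step(1)] reach_step(5) by blast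
  then show ?case using g_antimono reach_step by fastforce
qed

text \<open>The pruning stages are bounded by g: this is what makes the DAG rank well defined.\<close>
lemma not_in_pruned_above_g: "(j, q) \<in> V \<Longrightarrow> g j q < m \<Longrightarrow> (j, q) \<notin> pruned m"
proof (induction m arbitrary: j q)
  case 0 then show ?case by simp
next
  case (Suc m)
  show ?case
  proof (cases "g j q < m")
    case True then show ?thesis using Suc pruned_Suc_subset by blast
  next
    case False
    then have gm: "g j q = m" using Suc.prems by simp
    show ?thesis
    proof
      assume in_Suc: "(j, q) \<in> pruned (Suc m)"
      have const: "g l u = m" if "reach (pruned m) j q l u" for l u
      proof -
        have "g l u \<le> m" using reach_g_le[OF that pruned_subset_V] gm by simp
        moreover have "(l, u) \<in> pruned m" using reach_endpoints[OF that] by simp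
        then have "\<not> g l u < m" using Suc.IH pruned_subset_V by blast
        ultimately show ?thesis by simp
      qed
      show False
      proof (cases "even m")
        case True
        then obtain \<pi> where \<pi>: "\<pi> 0 = q" "inf_path (pruned m) j \<pi>"
          using in_Suc by (auto simp: has_inf_path_def pruned_Suc_even)
        have "g (j + k) (\<pi> k) = m" for k using const inf_path_reach[OF \<pi>(2), of k] \<pi>(1) by simp
        then have "odd m" using g_const_path_odd inf_path_mono[OF \<pi>(2) pruned_subset_V] by blast
        then show False using True by simp
      next
        case False
        then obtain l u where lu: "reach (pruned m) j q l u" "u \<in> acc A"
          using in_Suc by (auto simp: acc_free_def pruned_Suc_odd)
        then have "(l, u) \<in> V" using reach_endpoints pruned_subset_V by blast
        then have "even (g l u)" using g_even_acc lu(2) unfolding V_def by blast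
        then show False using False const[OF lu(1)] by simp
      qed
    qed
  qed
qed

lemma not_in_pruned_Suc_dag_rank: "(j, q) \<in> V \<Longrightarrow> (j, q) \<notin> pruned (Suc (dag_rank j q))"
  unfolding dag_rank_def by (rule LeastI[of _ "g j q"]) (rule not_in_pruned_above_g, auto)

lemma dag_rank_le_g: "(j, q) \<in> V \<Longrightarrow> dag_rank j q \<le> g j q"
  unfolding dag_rank_def by (rule Least_le) (rule not_in_pruned_above_g, auto)

lemma pruned_iff_le_dag_rank: "(j, q) \<in> V \<Longrightarrow> (j, q) \<in> pruned m \<longleftrightarrow> m \<le> dag_rank j q"
proof
  assume "(j, q) \<in> V" "(j, q) \<in> pruned m"
  then show "m \<le> dag_rank j q"
    using not_in_pruned_Suc_dag_rank pruned_antimono[of "Suc (dag_rank j q)" m]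
    by (meson not_less_eq_eq subsetD)
next
  assume "(j, q) \<in> V" "m \<le> dag_rank j q"
  then show "(j, q) \<in> pruned m"
    using not_less_Least[of "m - 1" "\<lambda>m. (j, q) \<notin> pruned (Suc m)"]
    unfolding dag_rank_def by (cases m) auto
qed

lemma dag_rank_antimono:
  assumes "(j, q) \<in> V" "q' \<in> trans A q (w j)"
  shows "dag_rank (Suc j) q' \<le> dag_rank j q"
proof -
  have "(Suc j, q') \<in> pruned (dag_rank (Suc j) q')"
    using pruned_iff_le_dag_rank V_succ[OF assms] by simp
  then show ?thesis using pruned_pred_closed[OF assms] pruned_iff_le_dag_rank[OF assms(1)] by blast
qed

lemma dag_rank_even_acc: "(j, q) \<in> V \<Longrightarrow> q \<in> acc A \<Longrightarrow> even (dag_rank j q)"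
proof (rule ccontr)
  assume V: "(j, q) \<in> V" and acc: "q \<in> acc A" and odd: "odd (dag_rank j q)"
  have in_pruned: "(j, q) \<in> pruned (dag_rank j q)" using pruned_iff_le_dag_rank V by simp
  moreover have "(j, q) \<notin> pruned (Suc (dag_rank j q))" using not_in_pruned_Suc_dag_rank V by simp
  ultimately have "acc_free (pruned (dag_rank j q)) j q"
    using odd by (simp add: pruned_Suc_odd)
  then show False using in_pruned acc reach_refl unfolding acc_free_def by blast
qed

lemma dag_rank_odd_succ:
  assumes V: "(j, q) \<in> V" and odd: "odd (dag_rank j q)"
  shows "\<exists>q'\<in>trans A q (w j). dag_rank (Suc j) q' = dag_rank j q"
proof -
  have "(j, q) \<in> pruned (dag_rank j q)" using pruned_iff_le_dag_rank V by simp
  then obtain \<pi> where \<pi>: "\<pi> 0 = q" "inf_path (pruned (dag_rank j q)) j \<pi>"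
    using has_inf_path_pruned_odd odd unfolding has_inf_path_def by blast
  have "\<pi> (Suc 0) \<in> trans A (\<pi> 0) (w (j + 0))" "(j + Suc 0, \<pi> (Suc 0)) \<in> pruned (dag_rank j q)"
    using \<pi>(2) unfolding inf_path_def by blast+
  then have succ: "\<pi> 1 \<in> trans A q (w j)" and "(Suc j, \<pi> 1) \<in> pruned (dag_rank j q)"
    using \<pi>(1) by simp_all
  then have "dag_rank j q \<le> dag_rank (Suc j) (\<pi> 1)"
    using pruned_iff_le_dag_rank pruned_subset_V by blast
  then have "dag_rank (Suc j) (\<pi> 1) = dag_rank j q"
    using dag_rank_antimono[OF V succ] by simp
  then show ?thesis using succ by blast
qed

lemma const_rank_path_odd:
  assumes \<pi>: "inf_path G j \<pi>" and G: "G \<subseteq> {(l, u) \<in> V. dag_rank l u = c}"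
  shows "odd c"
proof
  assume "even c"
  have G_c: "G \<subseteq> pruned c"
  proof
    fix v assume "v \<in> G"
    with G show "v \<in> pruned c" using pruned_iff_le_dag_rank[of "fst v" "snd v" c] by auto
  qed
  have start: "(j, \<pi> 0) \<in> G" using \<pi> unfolding inf_path_def by (metis add_0_right)
  have "has_inf_path (pruned c) j (\<pi> 0)"
    using inf_path_mono[OF \<pi> G_c] unfolding has_inf_path_def by blast
  then have "(j, \<pi> 0) \<in> pruned (Suc c)"
    using start G_c \<open>even c\<close> by (auto simp: pruned_Suc_even)
  moreover have "(j, \<pi> 0) \<in> V" "dag_rank j (\<pi> 0) = c" using start G by auto
  ultimately show False using pruned_iff_le_dag_rank[of j "\<pi> 0" "Suc c"] by simp
qed

lemma reach_vertex_of_rank: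
  assumes odd: "odd k" and in_k: "(j, q) \<in> pruned k"
  shows "\<exists>l u. reach (pruned k) j q l u \<and> dag_rank l u = k"
proof -
  \<comment> \<open>a descendant minimising g has constant g along its paths, so it is F-free\<close>
  define D where "D = {(l, u). reach (pruned k) j q l u}"
  have "(j, q) \<in> D" unfolding D_def using in_k reach_refl by simp
  then obtain l u where lu: "(l, u) \<in> D" and min: "\<And>l' u'. (l', u') \<in> D \<Longrightarrow> g l u \<le> g l' u'"
    using ex_has_least_nat[of "\<lambda>x. x \<in> D" "(j, q)" "\<lambda>x. g (fst x) (snd x)"] by fastforce
  have r: "reach (pruned k) j q l u" using lu D_def by simp
  have lu_k: "(l, u) \<in> pruned k" using reach_endpoints[OF r] by simp
  have const: "g l' u' = g l u" if "reach (pruned k) l u l' u'" for l' u'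
    using min[of l' u'] reach_trans[OF that r] reach_g_le[OF that pruned_subset_V]
    unfolding D_def by simp
  obtain \<pi> where \<pi>: "\<pi> 0 = u" "inf_path (pruned k) l \<pi>"
    using has_inf_path_pruned_odd[OF odd lu_k] unfolding has_inf_path_def by blast
  have "g (l + i) (\<pi> i) = g l u" for i using const inf_path_reach[OF \<pi>(2), of i] \<pi>(1) by simp
  then have "odd (g l u)" using g_const_path_odd inf_path_mono[OF \<pi>(2) pruned_subset_V] by blast
  have "acc_free (pruned k) l u" unfolding acc_free_def
  proof (intro allI impI)
    fix l' u' assume r': "reach (pruned k) l u l' u'"
    then have "(l', u') \<in> V" using reach_endpoints pruned_subset_V by blast
    then show "u' \<notin> acc A"
      using g_even_acc[of l' u'] const[OF r'] \<open>odd (g l u)\<close> unfolding V_def by auto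
  qed
  then have "(l, u) \<notin> pruned (Suc k)" using odd by (simp add: pruned_Suc_odd)
  moreover have lu_V: "(l, u) \<in> V" using lu_k pruned_subset_V by blast
  ultimately have "\<not> Suc k \<le> dag_rank l u" using pruned_iff_le_dag_rank by blast
  moreover have "k \<le> dag_rank l u" using pruned_iff_le_dag_rank[OF lu_V] lu_k by blast
  ultimately have "dag_rank l u = k" by simp
  with r show ?thesis by auto
qed

lemma has_inf_path_V:
  assumes V: "(j, q) \<in> V"
  shows "has_inf_path V j q"
proof (rule konig)
  show "\<exists>u. reach V j q (j + k) u" for k
  proof (induction k)
    case 0 then show ?case using V reach_refl by auto
  next
    case (Suc k)
    then obtain u where u: "reach V j q (j + k) u" by blast
    obtain u' where u': "u' \<in> trans A u (w (j + k))" using complete unfolding complete_def by blast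
    have "(Suc (j + k), u') \<in> V" using V_succ reach_endpoints[OF u] u' by blast
    then show ?case using reach_step[OF u u'] by auto
  qed
qed

end

section \<open>Tight level rankings\<close>

context ranked_run_dag
begin

definition level_ranking :: "nat \<Rightarrow> 'q \<Rightarrow> nat" where
  "level_ranking j q = (if q \<in> level j then dag_rank j q else 0)"

lemma level_nonempty: "j0 \<le> j \<Longrightarrow> level j \<noteq> {}"
proof (induction j rule: dec_induct)
  case base then show ?case using level_j0_nonempty .
next
  case (step j)
  then obtain q where "q \<in> level j" by blast
  moreover obtain q' where "q' \<in> trans A q (w j)" using complete unfolding complete_def by blast
  ultimately show ?case by (auto simp: trans_set_def)
qed

lemma level_ranking_bounded: "j0 \<le> j \<Longrightarrow> level_ranking j q \<le> 2 * card (UNIV :: 'q set)"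
  using dag_rank_le_g[of j q] g_bounded[of j q] unfolding level_ranking_def V_def by auto

lemma level_ranking_antimono:
  "j0 \<le> j \<Longrightarrow> q \<in> level j \<Longrightarrow> q' \<in> trans A q (w j) \<Longrightarrow> level_ranking (Suc j) q' \<le> level_ranking j q"
  using dag_rank_antimono[OF in_V] unfolding level_ranking_def by (auto simp: trans_set_def)

lemma is_ranking_level_ranking: "j0 \<le> j \<Longrightarrow> is_ranking A (level_ranking j)"
  unfolding is_ranking_def using level_ranking_bounded dag_rank_even_acc
  unfolding level_ranking_def V_def by auto

lemma rank_level_ranking_bounded: "j0 \<le> j \<Longrightarrow> rank (level_ranking j) \<le> 2 * card (UNIV :: 'q set)"
  using rank_in_range level_ranking_bounded by metis

lemma rank_level_ranking_attained:
  assumes "j0 \<le> j"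
  shows "\<exists>q\<in>level j. dag_rank j q = rank (level_ranking j)"
proof -
  obtain q' where q': "level_ranking j q' = rank (level_ranking j)" using rank_in_range by blast
  obtain q where q: "q \<in> level j" using level_nonempty[OF assms] by blast
  show ?thesis
  proof (cases "q' \<in> level j")
    case True then show ?thesis using q' unfolding level_ranking_def by auto
  next
    case False
    then have "rank (level_ranking j) = 0" using q' unfolding level_ranking_def by simp
    then show ?thesis using q le_rank[of "level_ranking j" q] unfolding level_ranking_def by auto
  qed
qed

lemma rank_level_ranking_Suc_le:
  assumes "j0 \<le> j"
  shows "rank (level_ranking (Suc j)) \<le> rank (level_ranking j)"
proof -
  have "level_ranking (Suc j) q \<le> rank (level_ranking j)" for q
  proof (cases "q \<in> level (Suc j)")
    case True
    then obtain p where p: "p \<in> level j" "q \<in> trans A p (w j)" by (auto simp: trans_set_def)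
    then have "dag_rank (Suc j) q \<le> dag_rank j p" using dag_rank_antimono in_V assms by blast
    also have "\<dots> = level_ranking j p" using p unfolding level_ranking_def by simp
    also have "\<dots> \<le> rank (level_ranking j)" by (rule le_rank)
    finally show ?thesis using True unfolding level_ranking_def by simp
  qed (simp add: level_ranking_def)
  then show ?thesis unfolding rank_def by (simp add: Max_le_iff)
qed

lemma eventually_rank_level_ranking_const:
  "\<exists>r. \<forall>\<^sub>F j in sequentially. rank (level_ranking j) = r"
proof -
  obtain J where J: "j0 \<le> J" "\<And>j. j0 \<le> j \<Longrightarrow> rank (level_ranking J) \<le> rank (level_ranking j)"
    using ex_has_least_nat[of "\<lambda>j. j0 \<le> j" j0 "\<lambda>j. rank (level_ranking j)"] by blast
  have "rank (level_ranking j) \<le> rank (level_ranking J)" if "J \<le> j" for j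
    using that
  proof (induction rule: dec_induct)
    case (step j)
    then show ?case using rank_level_ranking_Suc_le[of j] J(1) by simp
  qed simp
  then have "\<forall>j\<ge>J. rank (level_ranking j) = rank (level_ranking J)"
    using J by (simp add: order_antisym)
  then show ?thesis unfolding eventually_sequentially by blast
qed

lemma stable_rank_odd:
  assumes "\<forall>\<^sub>F j in sequentially. rank (level_ranking j) = r"
  shows "odd r"
proof -
  obtain J where J: "j0 \<le> J" "\<And>j. J \<le> j \<Longrightarrow> rank (level_ranking j) = r"
    using eventually_sequentially_from[OF assms] by blast
  \<comment> \<open>every vertex of the maximal rank r has a parent of rank r, so these layers
    carry an infinite path\<close>
  define X where "X d = {u \<in> level (J + d). dag_rank (J + d) u = r}" for d
  have "\<exists>\<pi>. inf_path {(l, u) \<in> V. dag_rank l u = r} J \<pi>"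
  proof (rule inf_path_through_layers[of X])
    show "X d \<noteq> {}" for d
      using rank_level_ranking_attained[of "J + d"] J unfolding X_def by auto
  next
    fix d u assume "u \<in> X (Suc d)"
    then have u: "u \<in> level (Suc (J + d))" "dag_rank (Suc (J + d)) u = r" unfolding X_def by auto
    then obtain p where p: "p \<in> level (J + d)" "u \<in> trans A p (w (J + d))"
      by (auto simp: trans_set_def)
    have "r \<le> dag_rank (J + d) p" using dag_rank_antimono[OF in_V p(2)] p(1) J(1) u(2) by simp
    moreover have "dag_rank (J + d) p \<le> r"
      using le_rank[of "level_ranking (J + d)" p] J(2)[of "J + d"] p(1)
      unfolding level_ranking_def by simp
    ultimately show "\<exists>p\<in>X d. u \<in> trans A p (w (J + d))" using p unfolding X_def by auto
  next
    fix d u assume "u \<in> X d"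
    then show "(J + d, u) \<in> {(l, u) \<in> V. dag_rank l u = r}" using in_V J(1) unfolding X_def by simp
  qed
  then show ?thesis using const_rank_path_odd by blast
qed

lemma odd_rank_occurs_eventually:
  assumes stable: "\<forall>\<^sub>F j in sequentially. rank (level_ranking j) = r" and k: "odd k" "k \<le> r"
  shows "\<forall>\<^sub>F l in sequentially. \<exists>u\<in>level l. dag_rank l u = k"
proof -
  obtain J where J: "j0 \<le> J" "rank (level_ranking J) = r"
    using eventually_sequentially_from[OF stable] by blast
  obtain x where x: "x \<in> level J" "dag_rank J x = r"
    using rank_level_ranking_attained J by blast
  then have "(J, x) \<in> pruned k" using pruned_iff_le_dag_rank in_V J(1) k(2) by simp
  then obtain l u where lu: "reach (pruned k) J x l u" "dag_rank l u = k"
    using reach_vertex_of_rank k(1) by blast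
  have "(l, u) \<in> V" using reach_endpoints[OF lu(1)] pruned_subset_V by blast
  then have l: "j0 \<le> l" "u \<in> level l" unfolding V_def by auto
  have "\<exists>v\<in>level (l + d). dag_rank (l + d) v = k" for d
  proof (induction d)
    case 0 then show ?case using l(2) lu(2) by auto
  next
    case (Suc d)
    then obtain v where v: "v \<in> level (l + d)" "dag_rank (l + d) v = k" by blast
    then have "(l + d, v) \<in> V" using in_V l(1) by simp
    then obtain v' where "v' \<in> trans A v (w (l + d))" "dag_rank (Suc (l + d)) v' = k"
      using dag_rank_odd_succ v(2) k(1) by auto
    moreover have "v' \<in> level (Suc (l + d))" using calculation(1) v(1) by (auto simp: trans_set_def)
    ultimately show ?case by auto
  qed
  then show ?thesis unfolding eventually_sequentially by (metis le_add_diff_inverse)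
qed

lemma eventually_tight:
  "\<exists>r. \<forall>\<^sub>F j in sequentially. tight (level j) (level_ranking j) \<and> rank (level_ranking j) = r"
proof -
  obtain r where stable: "\<forall>\<^sub>F j in sequentially. rank (level_ranking j) = r"
    using eventually_rank_level_ranking_const by blast
  have "\<forall>\<^sub>F l in sequentially. \<forall>k\<in>{k. odd k \<and> k \<le> r}. \<exists>u\<in>level l. dag_rank l u = k"
    by (rule eventually_ball_finite) (use odd_rank_occurs_eventually[OF stable] in auto)
  then have "\<forall>\<^sub>F j in sequentially. tight (level j) (level_ranking j) \<and> rank (level_ranking j) = r"
    using stable
  proof eventually_elim
    case (elim j)
    then have "\<forall>k. odd k \<and> k \<le> rank (level_ranking j) \<longrightarrow> k \<in> level_ranking j ` level j"
      unfolding level_ranking_def by force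
    then show ?case using elim stable_rank_odd[OF stable] unfolding tight_def level_ranking_def
      by simp
  qed
  then show ?thesis by blast
qed

end

section \<open>Delayed simulation and the DAG rank\<close>

definition winning_strategy :: "('q, 'a) ba \<Rightarrow> ('q \<Rightarrow> 'q \<times> 'a \<times> 'q \<Rightarrow> 'q) \<Rightarrow> 'q \<Rightarrow> 'q \<Rightarrow> bool" where
  "winning_strategy A \<sigma> p r \<longleftrightarrow> valid_strategy A \<sigma> \<and>
     (\<forall>\<alpha> ps. is_run A p \<alpha> ps \<longrightarrow>
        (\<forall>i. ps i \<in> acc A \<longrightarrow> (\<exists>k\<ge>i. dup_play \<sigma> r \<alpha> ps k \<in> acc A)))"

lemma de_sim_iff_winning_strategy: "de_sim A p r \<longleftrightarrow> (\<exists>\<sigma>. winning_strategy A \<sigma> p r)"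
  unfolding de_sim_def winning_strategy_def by blast

lemma dup_play_Cons:
  "dup_play \<sigma> r (case_nat a \<alpha>) (case_nat p ps) (Suc k) = dup_play \<sigma> (\<sigma> r (p, a, ps 0)) \<alpha> ps k"
  by (induction k) auto

lemma is_run_dup_play:
  "valid_strategy A \<sigma> \<Longrightarrow> is_run A p \<alpha> ps \<Longrightarrow> is_run A r \<alpha> (dup_play \<sigma> r \<alpha> ps)"
  unfolding valid_strategy_def is_run_def by simp

lemma winning_strategy_step:
  assumes win: "winning_strategy A \<sigma> p r" and p': "p' \<in> trans A p a"
  shows "winning_strategy A \<sigma> p' (\<sigma> r (p, a, p'))"
  unfolding winning_strategy_def
proof (intro conjI allI impI)
  show "valid_strategy A \<sigma>" using win unfolding winning_strategy_def by blast
next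
  fix \<alpha> ps i
  assume run: "is_run A p' \<alpha> ps" and acc: "ps i \<in> acc A"
  have "is_run A p (case_nat a \<alpha>) (case_nat p ps)"
    using run p' unfolding is_run_def by (auto split: nat.split)
  moreover have "case_nat p ps (Suc i) \<in> acc A" using acc by simp
  ultimately obtain k where k: "Suc i \<le> k" "dup_play \<sigma> r (case_nat a \<alpha>) (case_nat p ps) k \<in> acc A"
    using win unfolding winning_strategy_def by blast
  then obtain k' where k': "k = Suc k'" by (cases k) auto
  have "ps 0 = p'" using run unfolding is_run_def by simp
  then have "dup_play \<sigma> (\<sigma> r (p, a, p')) \<alpha> ps k' \<in> acc A"
    using k(2) dup_play_Cons[of \<sigma> r a \<alpha> p ps k'] unfolding k' by simp
  then show "\<exists>k\<ge>i. dup_play \<sigma> (\<sigma> r (p, a, p')) \<alpha> ps k \<in> acc A"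
    using k(1) k' by auto
qed

lemma winning_strategy_play:
  assumes "winning_strategy A \<sigma> p r" and run: "is_run A p \<alpha> ps"
  shows "winning_strategy A \<sigma> (ps t) (dup_play \<sigma> r \<alpha> ps t)"
proof (induction t)
  case 0 then show ?case using assms unfolding is_run_def by simp
next
  case (Suc t)
  have "ps (Suc t) \<in> trans A (ps t) (\<alpha> t)" using run unfolding is_run_def by blast
  from winning_strategy_step[OF Suc this] show ?case by simp
qed

context run_dag
begin

lemma de_sim_answer_path:
  assumes \<pi>: "inf_path V j \<pi>" and sim: "de_sim A (\<pi> 0) q" and q: "(j, q) \<in> V"
  shows "\<exists>\<rho>. \<rho> 0 = q \<and> inf_path V j \<rho> \<and> (\<forall>k. de_sim A (\<pi> k) (\<rho> k))
           \<and> (\<forall>i. \<pi> i \<in> acc A \<longrightarrow> (\<exists>k\<ge>i. \<rho> k \<in> acc A))"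
proof -
  define \<alpha> where "\<alpha> = (\<lambda>k. w (j + k))"
  have run: "is_run A (\<pi> 0) \<alpha> \<pi>" using \<pi> inf_path_V_iff_run unfolding \<alpha>_def by simp
  obtain \<sigma> where \<sigma>: "winning_strategy A \<sigma> (\<pi> 0) q"
    using sim unfolding de_sim_iff_winning_strategy by blast
  define \<rho> where "\<rho> = dup_play \<sigma> q \<alpha> \<pi>"
  have "is_run A q \<alpha> \<rho>"
    using is_run_dup_play[of A \<sigma> "\<pi> 0" \<alpha> \<pi> q] \<sigma> run unfolding winning_strategy_def \<rho>_def by blast
  moreover have "\<rho> 0 = q" unfolding \<rho>_def by simp
  ultimately have "inf_path V j \<rho>" using inf_path_V_iff_run[of j \<rho>] q unfolding \<alpha>_def by simp
  moreover have "de_sim A (\<pi> k) (\<rho> k)" for k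
    using winning_strategy_play[OF \<sigma> run] unfolding de_sim_iff_winning_strategy \<rho>_def by blast
  moreover have "\<forall>i. \<pi> i \<in> acc A \<longrightarrow> (\<exists>k\<ge>i. \<rho> k \<in> acc A)"
    using \<sigma> run unfolding winning_strategy_def \<rho>_def by blast
  ultimately show ?thesis using \<open>\<rho> 0 = q\<close> by blast
qed

end

context ranked_run_dag
begin

lemma not_pruned_even_rank_bound:
  assumes "even b" "(j, q) \<notin> pruned (Suc b)"
  shows "\<exists>T. \<forall>l u. reach V j q l u \<longrightarrow> j + T \<le> l \<longrightarrow> dag_rank l u < b"
proof -
  obtain T where T: "\<And>u. \<not> reach (pruned b) j q (j + T) u"
  proof (cases "(j, q) \<in> pruned b")
    case True
    then have "\<not> has_inf_path (pruned b) j q" using assms by (simp add: pruned_Suc_even)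
    then show ?thesis using konig that by blast
  next
    case False
    then show ?thesis using that[of 0] reach_endpoints by blast
  qed
  have "dag_rank l u < b" if r: "reach V j q l u" and l: "j + T \<le> l" for l u
  proof (rule ccontr)
    assume "\<not> dag_rank l u < b"
    then have "(l, u) \<in> pruned b" using pruned_iff_le_dag_rank reach_endpoints[OF r] by simp
    then have "reach (pruned b) j q l u" using reach_V_pruned r by blast
    then show False using reach_prefix[of _ j q l u "j + T"] l T by auto
  qed
  then show ?thesis by blast
qed

lemma pruned_acc_path_late:
  assumes "odd a" and p: "(j, p) \<in> pruned (Suc (Suc a))"
  shows "\<exists>\<pi> i. \<pi> 0 = p \<and> inf_path (pruned a) j \<pi> \<and> T \<le> i \<and> \<pi> i \<in> acc A"
proof -
  obtain \<pi>1 where \<pi>1: "\<pi>1 0 = p" "inf_path (pruned (Suc (Suc a))) j \<pi>1"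
    using has_inf_path_pruned_odd[OF _ p] \<open>odd a\<close> unfolding has_inf_path_def by auto
  have r1: "reach (pruned (Suc (Suc a))) j p (j + T) (\<pi>1 T)"
    using inf_path_reach[OF \<pi>1(2)] \<pi>1(1) by metis
  then have "(j + T, \<pi>1 T) \<in> pruned (Suc a)" using reach_endpoints pruned_Suc_subset by blast
  then have "\<not> acc_free (pruned a) (j + T) (\<pi>1 T)"
    using \<open>odd a\<close> by (simp add: pruned_Suc_odd)
  then obtain l u where r2: "reach (pruned a) (j + T) (\<pi>1 T) l u" and u: "u \<in> acc A"
    unfolding acc_free_def by blast
  have "reach (pruned a) j p l u"
    using reach_trans[OF r2 reach_mono[OF r1 pruned_antimono]] by simp
  moreover obtain \<pi>2 where \<pi>2: "\<pi>2 0 = u" "inf_path (pruned a) l \<pi>2"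
    using has_inf_path_pruned_odd[OF \<open>odd a\<close>] reach_endpoints[OF r2] unfolding has_inf_path_def
    by blast
  ultimately obtain \<pi> where \<pi>: "\<pi> 0 = p" "inf_path (pruned a) j \<pi>" "\<pi> (l - j) = u"
    using reach_inf_path_append by (metis add_0_right)
  moreover have "T \<le> l - j" using reach_endpoints[OF r2] by auto
  ultimately show ?thesis using u by blast
qed

lemma de_sim_odd_dag_rank_le:
  assumes "(j, p) \<in> V" "(j, q) \<in> V" "de_sim A p q" "2 * m + 1 \<le> dag_rank j p"
  shows "2 * m + 1 \<le> dag_rank j q"
  using assms
proof (induction m arbitrary: j p q)
  case 0
  then have "(j, q) \<in> pruned 1" using has_inf_path_V by (simp add: pruned_Suc_even)
  then show ?case using pruned_iff_le_dag_rank[of j q 1] 0 by simp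
next
  case (Suc m)
  define a where "a = 2 * m + 1"
  have "odd a" unfolding a_def by simp
  show ?case
  proof (rule ccontr)
    assume "\<not> 2 * Suc m + 1 \<le> dag_rank j q"
    then have "(j, q) \<notin> pruned (Suc (Suc a))"
      using pruned_iff_le_dag_rank[OF Suc.prems(2)] a_def by simp
    then obtain T where T: "\<And>l u. reach V j q l u \<Longrightarrow> j + T \<le> l \<Longrightarrow> dag_rank l u < Suc a"
      using not_pruned_even_rank_bound[of "Suc a" j q] \<open>odd a\<close> by (metis even_Suc)
    have "(j, p) \<in> pruned (Suc (Suc a))"
      using pruned_iff_le_dag_rank[OF Suc.prems(1)] Suc.prems(4) a_def by simp
    then obtain \<pi> i where \<pi>: "\<pi> 0 = p" "inf_path (pruned a) j \<pi>" "T \<le> i" "\<pi> i \<in> acc A"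
      using pruned_acc_path_late \<open>odd a\<close> by blast
    obtain \<rho> where \<rho>: "inf_path V j \<rho>" "\<And>k. de_sim A (\<pi> k) (\<rho> k)"
      "\<And>i. \<pi> i \<in> acc A \<Longrightarrow> \<exists>k\<ge>i. \<rho> k \<in> acc A" "\<rho> 0 = q"
      using de_sim_answer_path[OF inf_path_mono[OF \<pi>(2) pruned_subset_V]] \<pi>(1) Suc.prems(2,3)
      by metis
    have "\<rho> k \<notin> acc A" if "T \<le> k" for k
    proof
      assume acc: "\<rho> k \<in> acc A"
      have "(j + k, \<pi> k) \<in> pruned a" using \<pi>(2) unfolding inf_path_def by blast
      then have \<pi>_k: "(j + k, \<pi> k) \<in> V" "a \<le> dag_rank (j + k) (\<pi> k)"
        using pruned_subset_V pruned_iff_le_dag_rank[of "j + k" "\<pi> k" a] by auto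
      have \<rho>_k: "(j + k, \<rho> k) \<in> V" "reach V j q (j + k) (\<rho> k)"
        using \<rho>(1) inf_path_reach[OF \<rho>(1), of k] \<rho>(4) unfolding inf_path_def by auto
      have "a \<le> dag_rank (j + k) (\<rho> k)" using Suc.IH[OF \<pi>_k(1) \<rho>_k(1) \<rho>(2)] \<pi>_k(2) a_def by blast
      moreover have "dag_rank (j + k) (\<rho> k) < Suc a" using T \<rho>_k(2) that by simp
      ultimately have "dag_rank (j + k) (\<rho> k) = a" by simp
      then show False using dag_rank_even_acc[OF \<rho>_k(1) acc] \<open>odd a\<close> by simp
    qed
    then show False using \<rho>(3)[OF \<pi>(4)] \<pi>(3) by (meson order_trans)
  qed
qed

lemma de_sim_dag_rank_le_ceil_even:
  assumes "j0 \<le> j" "p \<in> level j" "q \<in> level j" "de_sim A p q"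
  shows "dag_rank j p \<le> ceil_even (dag_rank j q)"
proof (cases "dag_rank j p = 0")
  case False
  define m where "m = (dag_rank j p - 1) div 2"
  have "2 * m + 1 \<le> dag_rank j p" "dag_rank j p \<le> 2 * m + 2" using False unfolding m_def by auto
  moreover have "2 * m + 1 \<le> dag_rank j q"
    using de_sim_odd_dag_rank_le[OF in_V in_V] assms calculation(1) by blast
  ultimately show ?thesis unfolding ceil_even_def by (auto elim!: evenE) presburger
qed simp

end

section \<open>An accepting run of the reduced automaton\<close>

lemma finite_bounded_funs: "finite {f :: 'q::finite \<Rightarrow> nat. \<forall>q. f q \<le> b}"
proof -
  have "{f :: 'q \<Rightarrow> nat. \<forall>q. f q \<le> b}
        = {f. \<forall>x. (x \<in> UNIV \<longrightarrow> f x \<in> {..b}) \<and> (x \<notin> UNIV \<longrightarrow> f x = 0)}"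
    by auto
  then show ?thesis using finite_set_of_finite_funs[of "UNIV :: 'q set" "{..b}" 0] by simp
qed

lemma finite_Q2:
  fixes A :: "('q::finite, 'a) ba"
  shows "finite (Q2 A)"
proof -
  let ?n = "2 * card (UNIV :: 'q set)"
  have "Q2 A \<subseteq> UNIV \<times> UNIV \<times> {f. \<forall>q. f q \<le> ?n} \<times> {..?n}"
    unfolding Q2_def tight_rankings_def is_ranking_def by auto
  moreover have "finite (UNIV \<times> UNIV \<times> {f. \<forall>q. f q \<le> ?n} \<times> {..?n}
      :: ('q set \<times> 'q set \<times> ('q \<Rightarrow> nat) \<times> nat) set)"
    by (intro finite_cartesian_product) (simp_all add: finite_bounded_funs)
  ultimately show ?thesis by (rule finite_subset)
qed

lemma accepting_runI:
  assumes "infinite E" "finite (\<rho> ` E)" "\<rho> ` E \<subseteq> acc B"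
  shows "accepting_run B \<rho>"
proof -
  obtain j where j: "j \<in> E" "infinite {i \<in> E. \<rho> i = \<rho> j}"
    using pigeonhole_infinite[OF assms(1,2)] by blast
  have "infinite {i. \<rho> i = \<rho> j}" using j(2) by (rule infinite_super[rotated]) auto
  then show ?thesis using j(1) assms(3) unfolding accepting_run_def by blast
qed

locale tight_ranked_run_dag = ranked_run_dag A w j0 g for A :: "('q::finite, 'a) ba" and w j0 g +
  fixes r N :: nat
  assumes N_after_j0: "j0 < N"
    and tight_from_N: "\<And>j. N \<le> j \<Longrightarrow> tight (level j) (level_ranking j)"
    and rank_from_N: "\<And>j. N \<le> j \<Longrightarrow> rank (level_ranking j) = r"
begin

fun breakpoint_step :: "nat \<Rightarrow> 'q set \<times> nat \<Rightarrow> 'q set \<times> nat" where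
  "breakpoint_step l (Ob, i) =
     (if Ob = {}
      then (level (Suc l) \<inter> level_ranking (Suc l) -` {(i + 2) mod (r + 1)}, (i + 2) mod (r + 1))
      else (trans_set A Ob (w l) \<inter> level_ranking (Suc l) -` {i}, i))"

text \<open>breakpoint k is the obligation set and index of de_run (N + k).\<close>
primrec breakpoint :: "nat \<Rightarrow> 'q set \<times> nat" where
  "breakpoint 0 = ({}, 0)"
| "breakpoint (Suc k) = breakpoint_step (N + k) (breakpoint k)"

definition de_run :: "nat \<Rightarrow> 'q sstate" where
  "de_run j = (if j < N then Q1st (level j)
     else Q2st (level j) (fst (breakpoint (j - N))) (level_ranking j) (snd (breakpoint (j - N))))"

lemma odd_r: "odd r"
  using tight_from_N[of N] rank_from_N[of N] unfolding tight_def by simp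

lemma breakpoint_invariant:
  "fst (breakpoint k) \<subseteq> level (N + k) \<inter> level_ranking (N + k) -` {snd (breakpoint k)}
   \<and> even (snd (breakpoint k)) \<and> snd (breakpoint k) < r"
proof (induction k)
  case 0 then show ?case using odd_r by (simp add: odd_pos)
next
  case (Suc k)
  obtain Ob i where Ob_i: "breakpoint k = (Ob, i)" by fastforce
  show ?case
  proof (cases "Ob = {}")
    case True
    define i' where "i' = (i + 2) mod (r + 1)"
    have "even i'" unfolding i'_def using Suc Ob_i odd_r by (simp add: dvd_mod_iff)
    moreover have "i' < r + 1" unfolding i'_def by simp
    ultimately have "i' < r" using odd_r by (metis less_SucE Suc_eq_plus1)
    then show ?thesis using Ob_i True \<open>even i'\<close> unfolding i'_def by auto
  next
    case False
    have "Ob \<subseteq> level (N + k)" using Suc Ob_i by simp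
    then have "trans_set A Ob (w (N + k)) \<subseteq> level (Suc (N + k))" by (auto simp: trans_set_def)
    then show ?thesis using Ob_i False Suc by auto
  qed
qed

lemma de_run_state_in_Q2_de:
  assumes "N \<le> j"
  shows "(level j, fst (breakpoint (j - N)), level_ranking j, snd (breakpoint (j - N))) \<in> Q2_de A"
proof -
  define Ob i where "Ob = fst (breakpoint (j - N))" and "i = snd (breakpoint (j - N))"
  have inv: "Ob \<subseteq> level j \<inter> level_ranking j -` {i}" "even i" "i < r"
    using breakpoint_invariant[of "j - N"] assms unfolding Ob_def i_def by auto
  have "j0 \<le> j" using assms N_after_j0 by simp
  then have "level_ranking j \<in> tight_rankings A"
    using is_ranking_level_ranking tight_from_N[OF assms] unfolding tight_rankings_def tight_def
    by auto
  moreover have "i \<le> 2 * card (UNIV :: 'q set) - 2"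
    using rank_level_ranking_bounded[OF \<open>j0 \<le> j\<close>] rank_from_N[OF assms] inv(2,3)
    by (auto elim!: evenE) presburger
  ultimately have "(level j, Ob, level_ranking j, i) \<in> Q2 A"
    unfolding Q2_def using inv tight_from_N[OF assms] by auto
  moreover have "\<not> (\<exists>p\<in>level j. \<exists>q\<in>level j.
      de_sim A p q \<and> level_ranking j p > ceil_even (level_ranking j q))"
    using de_sim_dag_rank_le_ceil_even[OF \<open>j0 \<le> j\<close>] unfolding level_ranking_def
    by (simp add: not_less)
  ultimately show ?thesis unfolding Q2_de_def Ob_def i_def by blast
qed

lemma de_run_trans: "de_run (Suc j) \<in> schewe_trans A (Q2_de A) (de_run j) (w j)"
proof (cases "Suc j \<le> N")
  case True
  moreover have "(level N, {}, level_ranking N, 0) \<in> Q2_de A"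
    using de_run_state_in_Q2_de[of N] by simp
  ultimately show ?thesis
    using tight_from_N[of N] unfolding de_run_def schewe_trans_def by (auto simp: not_less_eq_eq)
next
  case False
  then have "N \<le> j" by simp
  define k where "k = j - N"
  obtain Ob i where Ob_i: "breakpoint k = (Ob, i)" by fastforce
  have j: "j = N + k" "Suc j - N = Suc k" using \<open>N \<le> j\<close> unfolding k_def by simp_all
  have "(level (Suc j), fst (breakpoint_step j (Ob, i)), level_ranking (Suc j),
         snd (breakpoint_step j (Ob, i))) \<in> Q2_de A"
    using de_run_state_in_Q2_de[of "Suc j"] \<open>N \<le> j\<close> j Ob_i by simp
  moreover have "\<forall>q\<in>level j. \<forall>q'\<in>trans A q (w j). level_ranking (Suc j) q' \<le> level_ranking j q"
    using level_ranking_antimono \<open>N \<le> j\<close> N_after_j0 by simp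
  moreover note rank_from_N[of j] rank_from_N[of "Suc j"] tight_from_N[of "Suc j"]
  ultimately show ?thesis
    using \<open>N \<le> j\<close> j Ob_i unfolding de_run_def schewe_trans_def by (cases "Ob = {}") auto
qed

lemma breakpoint_empty_infinitely: "\<exists>k\<ge>K. fst (breakpoint k) = {}"
proof (rule ccontr)
  assume "\<not> ?thesis"
  then have nonempty: "fst (breakpoint (K + d)) \<noteq> {}" for d by simp
  define i0 where "i0 = snd (breakpoint K)"
  have index: "snd (breakpoint (K + d)) = i0" for d
  proof (induction d)
    case (Suc d)
    then show ?case using nonempty[of d] by (cases "breakpoint (K + d)") simp
  qed (simp add: i0_def)
  \<comment> \<open>the obligation sets, all of the even rank i0, would carry an infinite path\<close>
  define X where "X d = fst (breakpoint (K + d))" for d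
  have "\<exists>\<pi>. inf_path {(l, u) \<in> V. dag_rank l u = i0} (N + K) \<pi>"
  proof (rule inf_path_through_layers[of X])
    show "X d \<noteq> {}" for d using nonempty unfolding X_def by simp
  next
    fix d u assume "u \<in> X (Suc d)"
    then show "\<exists>p\<in>X d. u \<in> trans A p (w (N + K + d))"
      using nonempty[of d] unfolding X_def
      by (cases "breakpoint (K + d)") (auto simp: trans_set_def add.assoc)
  next
    fix d u assume "u \<in> X d"
    then have "u \<in> level (N + K + d)" "level_ranking (N + K + d) u = i0"
      using breakpoint_invariant[of "K + d"] index[of d] unfolding X_def by (auto simp: add.assoc)
    then show "(N + K + d, u) \<in> {(l, u) \<in> V. dag_rank l u = i0}"
      using in_V N_after_j0 unfolding level_ranking_def by simp
  qed
  then have "odd i0" using const_rank_path_odd by blast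
  then show False using breakpoint_invariant[of K] unfolding i0_def by simp
qed

lemma accepting_run_de_run: "accepting_run (schewe_de A) de_run"
proof (rule accepting_runI)
  define E where "E = {j. N \<le> j \<and> fst (breakpoint (j - N)) = {}}"
  show "infinite E" unfolding infinite_nat_iff_unbounded_le
  proof
    fix m
    obtain k where "m \<le> k" "fst (breakpoint k) = {}" using breakpoint_empty_infinitely by blast
    then show "\<exists>j\<ge>m. j \<in> E" unfolding E_def by (intro exI[of _ "N + k"]) simp
  qed
  have visits: "de_run ` E \<subseteq> (\<lambda>(S, Ob, f, i). Q2st S Ob f i) ` Q2_de A \<inter> acc (schewe_de A)"
  proof
    fix s assume "s \<in> de_run ` E"
    then obtain j where j: "N \<le> j" "fst (breakpoint (j - N)) = {}" "s = de_run j"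
      unfolding E_def by auto
    let ?st = "(level j, {}, level_ranking j, snd (breakpoint (j - N)))"
    have "?st \<in> Q2_de A" using de_run_state_in_Q2_de[OF j(1)] j(2) by simp
    moreover have "s = Q2st (level j) {} (level_ranking j) (snd (breakpoint (j - N)))"
      using j unfolding de_run_def by simp
    ultimately show "s \<in> (\<lambda>(S, Ob, f, i). Q2st S Ob f i) ` Q2_de A \<inter> acc (schewe_de A)"
      unfolding schewe_de_def schewe_gen_def by (auto intro: rev_image_eqI[of ?st])
  qed
  then show "de_run ` E \<subseteq> acc (schewe_de A)" by blast
  have "finite (Q2_de A)"
    using finite_subset[OF _ finite_Q2] unfolding Q2_de_def by blast
  then show "finite (de_run ` E)"
    using finite_subset[OF _ finite_imageI] visits by (metis le_infE)
qed

lemma word_in_lang_schewe_de: "w \<in> lang (schewe_de A)"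
proof -
  have "is_run (schewe_de A) (Q1st (init A)) w de_run"
    using de_run_trans N_after_j0 unfolding is_run_def schewe_de_def schewe_gen_def de_run_def
    by simp
  then show ?thesis
    using accepting_run_de_run unfolding lang_def schewe_de_def schewe_gen_def by auto
qed

end

section \<open>Accepting runs of Schewe's automaton\<close>

lemma schewe_trans_mono: "QQ \<subseteq> QQ' \<Longrightarrow> schewe_trans A QQ st a \<subseteq> schewe_trans A QQ' st a"
  unfolding schewe_trans_def by (cases st) auto

lemma acc_schewe_gen_mono: "QQ \<subseteq> QQ' \<Longrightarrow> acc (schewe_gen A QQ) \<subseteq> acc (schewe_gen A QQ')"
  unfolding schewe_gen_def by auto

lemma lang_schewe_gen_mono:
  assumes "QQ \<subseteq> QQ'"
  shows "lang (schewe_gen A QQ) \<subseteq> lang (schewe_gen A QQ')"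
proof
  fix v assume "v \<in> lang (schewe_gen A QQ)"
  then obtain \<rho> where
    \<rho>: "is_run (schewe_gen A QQ) (Q1st (init A)) v \<rho>" "accepting_run (schewe_gen A QQ) \<rho>"
    unfolding lang_def schewe_gen_def by auto
  have "\<rho> (Suc i) \<in> schewe_trans A QQ (\<rho> i) (v i)" for i
    using \<rho>(1) unfolding is_run_def schewe_gen_def by simp
  then have "\<rho> (Suc i) \<in> schewe_trans A QQ' (\<rho> i) (v i)" for i
    by (rule subsetD[OF schewe_trans_mono[OF assms]])
  then have "is_run (schewe_gen A QQ') (Q1st (init A)) v \<rho>"
    using \<rho>(1) unfolding is_run_def schewe_gen_def by simp
  moreover have "accepting_run (schewe_gen A QQ') \<rho>"
    using \<rho>(2) acc_schewe_gen_mono[OF assms] unfolding accepting_run_def by blast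
  ultimately show "v \<in> lang (schewe_gen A QQ')" unfolding lang_def schewe_gen_def by auto
qed

fun is_Q2 :: "'q sstate \<Rightarrow> bool" where
  "is_Q2 (Q1st S) = False"
| "is_Q2 (Q2st S Ob f i) = True"

fun ranking_of :: "'q sstate \<Rightarrow> 'q \<Rightarrow> nat" where
  "ranking_of (Q1st S) = (\<lambda>_. 0)"
| "ranking_of (Q2st S Ob f i) = f"

fun obligation_of :: "'q sstate \<Rightarrow> 'q set" where
  "obligation_of (Q1st S) = {}"
| "obligation_of (Q2st S Ob f i) = Ob"

fun index_of :: "'q sstate \<Rightarrow> nat" where
  "index_of (Q1st S) = 0"
| "index_of (Q2st S Ob f i) = i"

locale schewe_run =
  fixes A :: "('q::finite, 'a) ba" and w :: "nat \<Rightarrow> 'a" and \<rho> :: "nat \<Rightarrow> 'q sstate"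
  assumes run: "is_run (schewe A) (Q1st (init A)) w \<rho>"
    and accepting: "accepting_run (schewe A) \<rho>"
begin

definition ranking_at :: "nat \<Rightarrow> 'q \<Rightarrow> nat" where "ranking_at j = ranking_of (\<rho> j)"
definition obligation_at :: "nat \<Rightarrow> 'q set" where "obligation_at j = obligation_of (\<rho> j)"
definition index_at :: "nat \<Rightarrow> nat" where "index_at j = index_of (\<rho> j)"

lemma run_step: "\<rho> (Suc j) \<in> schewe_trans A (Q2 A) (\<rho> j) (w j)"
  using run unfolding is_run_def schewe_def schewe_gen_def by simp

lemma run_shape:
  "\<rho> j = Q1st (reach_level A w j)
   \<or> \<rho> j = Q2st (reach_level A w j) (obligation_at j) (ranking_at j) (index_at j)
     \<and> (reach_level A w j, obligation_at j, ranking_at j, index_at j) \<in> Q2 A"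
proof (induction j)
  case 0 then show ?case using run unfolding is_run_def by simp
next
  case (Suc j)
  then consider "\<rho> j = Q1st (reach_level A w j)"
    | "\<rho> j = Q2st (reach_level A w j) (obligation_at j) (ranking_at j) (index_at j)"
    by blast
  then show ?case
  proof cases
    case 1
    then have "\<rho> (Suc j) \<in> schewe_trans A (Q2 A) (Q1st (reach_level A w j)) (w j)"
      using run_step[of j] by simp
    then show ?thesis by (auto simp: schewe_trans_def ranking_at_def obligation_at_def index_at_def)
  next
    case 2
    then have "\<rho> (Suc j) \<in> schewe_trans A (Q2 A)
        (Q2st (reach_level A w j) (obligation_at j) (ranking_at j) (index_at j)) (w j)"
      using run_step[of j] by simp
    then show ?thesis by (auto simp: schewe_trans_def ranking_at_def obligation_at_def index_at_def)
  qed
qed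

lemma Q1_run_accepted:
  assumes "\<And>j. \<not> is_Q2 (\<rho> j)"
  shows "w \<in> lang (schewe_gen A QQ)"
proof -
  have Q1: "\<rho> j = Q1st (reach_level A w j)" for j using assms[of j] run_shape[of j] by auto
  have "is_run (schewe_gen A QQ) (Q1st (init A)) w \<rho>"
    using run unfolding is_run_def schewe_def schewe_gen_def schewe_trans_def by (simp add: Q1)
  moreover obtain s where s: "s \<in> acc (schewe A)" "infinite {i. \<rho> i = s}"
    using accepting unfolding accepting_run_def by blast
  then obtain i where "\<rho> i = s" using not_finite_existsD by blast
  then have "s = Q1st {}" using s(1) Q1[of i] unfolding schewe_def schewe_gen_def by auto
  then have "accepting_run (schewe_gen A QQ) \<rho>"
    using s(2) unfolding accepting_run_def schewe_gen_def by auto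
  ultimately show ?thesis unfolding lang_def schewe_gen_def by auto
qed

lemma Q2_successor:
  assumes "is_Q2 (\<rho> j)"
  shows "\<exists>S' O' f' i'. \<rho> (Suc j) = Q2st S' O' f' i' \<and> S' = trans_set A (reach_level A w j) (w j)
    \<and> (\<forall>q\<in>reach_level A w j. \<forall>q'\<in>trans A q (w j). f' q' \<le> ranking_at j q)
    \<and> rank (ranking_at j) = rank f'
    \<and> (obligation_at j = {} \<and> i' = (index_at j + 2) mod (rank f' + 1) \<and> O' = S' \<inter> f' -` {i'}
       \<or> obligation_at j \<noteq> {} \<and> i' = index_at j
         \<and> O' = trans_set A (obligation_at j) (w j) \<inter> f' -` {index_at j})"
proof -
  have "\<rho> j = Q2st (reach_level A w j) (obligation_at j) (ranking_at j) (index_at j)"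
    using run_shape[of j] assms by auto
  then have "\<rho> (Suc j) \<in> schewe_trans A (Q2 A)
      (Q2st (reach_level A w j) (obligation_at j) (ranking_at j) (index_at j)) (w j)"
    using run_step[of j] by simp
  then show ?thesis by (simp only: schewe_trans_def sstate.case mem_Collect_eq) blast
qed

lemma Q2_step:
  assumes "is_Q2 (\<rho> j)"
  shows "is_Q2 (\<rho> (Suc j))"
    and "\<forall>q\<in>reach_level A w j. \<forall>q'\<in>trans A q (w j). ranking_at (Suc j) q' \<le> ranking_at j q"
    and "rank (ranking_at (Suc j)) = rank (ranking_at j)"
    and "obligation_at j = {} \<Longrightarrow>
           index_at (Suc j) = (index_at j + 2) mod (rank (ranking_at j) + 1)
           \<and> obligation_at (Suc j)
               = reach_level A w (Suc j) \<inter> ranking_at (Suc j) -` {index_at (Suc j)}"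
    and "obligation_at j \<noteq> {} \<Longrightarrow> index_at (Suc j) = index_at j"
    and "obligation_at j \<noteq> {} \<Longrightarrow>
           obligation_at (Suc j)
             = trans_set A (obligation_at j) (w j) \<inter> ranking_at (Suc j) -` {index_at j}"
  using Q2_successor[OF assms] by (auto simp: ranking_at_def obligation_at_def index_at_def)

end

locale schewe_run_Q2 = schewe_run A w \<rho> + run_dag A w j0
  for A :: "('q::finite, 'a) ba" and w \<rho> j0 +
  assumes Q2_at_j0: "is_Q2 (\<rho> j0)"
begin

abbreviation r0 :: nat where "r0 \<equiv> rank (ranking_at j0)"

lemma is_Q2_from_j0: "j0 \<le> l \<Longrightarrow> is_Q2 (\<rho> l)"
  by (induction rule: dec_induct) (use Q2_at_j0 Q2_step(1) in auto)

lemma state_in_Q2: "j0 \<le> l \<Longrightarrow> (level l, obligation_at l, ranking_at l, index_at l) \<in> Q2 A"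
  using run_shape[of l] is_Q2_from_j0[of l] by auto

lemma rank_ranking_at: "j0 \<le> l \<Longrightarrow> rank (ranking_at l) = r0"
  by (induction rule: dec_induct) (use Q2_step(3) is_Q2_from_j0 in auto)

lemma odd_r0: "odd r0"
  using state_in_Q2[of j0] unfolding Q2_def tight_def by auto

lemma obligation_empty_infinitely: "\<exists>l\<ge>m. obligation_at l = {}"
proof -
  obtain s where s: "s \<in> acc (schewe A)" "infinite {i. \<rho> i = s}"
    using accepting unfolding accepting_run_def by blast
  then obtain l where l: "max m j0 \<le> l" "\<rho> l = s" unfolding infinite_nat_iff_unbounded_le by blast
  then have "\<rho> l = Q2st (level l) (obligation_at l) (ranking_at l) (index_at l)"
    using run_shape[of l] is_Q2_from_j0[of l] by auto
  then have "obligation_at l = {}" using s(1) l(2) unfolding schewe_def schewe_gen_def by auto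
  then show ?thesis using l(1) by auto
qed

lemma index_const_while_nonempty:
  assumes "l \<le> l'" "\<And>k. l \<le> k \<Longrightarrow> k < l' \<Longrightarrow> j0 \<le> k \<and> obligation_at k \<noteq> {}"
  shows "index_at l' = index_at l"
  using assms
proof (induction rule: dec_induct)
  case (step k)
  then show ?case using Q2_step(5)[OF is_Q2_from_j0] by simp
qed simp

lemma next_reset:
  assumes "j0 \<le> e" "obligation_at e = {}"
  shows "\<exists>e'>e. obligation_at e' = {} \<and> index_at (Suc e') = (index_at (Suc e) + 2) mod (r0 + 1)"
proof -
  obtain e'' where "Suc e \<le> e''" "obligation_at e'' = {}" using obligation_empty_infinitely by blast
  then have ex: "e < e'' \<and> obligation_at e'' = {}" by simp
  define e' where "e' = (LEAST l. e < l \<and> obligation_at l = {})"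
  have e': "e < e'" "obligation_at e' = {}"
    using LeastI[of "\<lambda>l. e < l \<and> obligation_at l = {}", OF ex] unfolding e'_def by auto
  have "j0 \<le> k \<and> obligation_at k \<noteq> {}" if "Suc e \<le> k" "k < e'" for k
    using not_less_Least[of k "\<lambda>l. e < l \<and> obligation_at l = {}"] that assms(1)
    unfolding e'_def by auto
  then have "index_at e' = index_at (Suc e)"
    using index_const_while_nonempty[of "Suc e" e'] e'(1) by simp
  moreover have "j0 \<le> e'" using assms(1) e'(1) by simp
  then have "index_at (Suc e') = (index_at e' + 2) mod (r0 + 1)"
    using Q2_step(4)[OF is_Q2_from_j0 e'(2)] rank_ranking_at[of e'] by simp
  ultimately show ?thesis using e' by auto
qed

lemma reset_to_every_even_index:
  assumes "j0 \<le> m" "even c" "c \<le> r0"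
  shows "\<exists>e\<ge>m. obligation_at e = {} \<and> index_at (Suc e) = c"
proof -
  obtain e0 where e0: "m \<le> e0" "obligation_at e0 = {}" using obligation_empty_infinitely by blast
  have "j0 \<le> e0" using assms(1) e0(1) by simp
  define x where "x = index_at (Suc e0)"
  have x: "x = (index_at e0 + 2) mod (r0 + 1)"
    using Q2_step(4)[OF is_Q2_from_j0 e0(2)] rank_ranking_at[of e0] \<open>j0 \<le> e0\<close> unfolding x_def
    by simp
  have iterate: "\<exists>e\<ge>m. obligation_at e = {} \<and> index_at (Suc e) = (x + 2 * t) mod (r0 + 1)" for t
  proof (induction t)
    case 0 then show ?case using e0 x by (auto simp: x_def)
  next
    case (Suc t)
    then obtain e where
      e: "m \<le> e" "obligation_at e = {}" "index_at (Suc e) = (x + 2 * t) mod (r0 + 1)"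
      by blast
    then obtain e' where "e < e'" "obligation_at e' = {}"
      "index_at (Suc e') = ((x + 2 * t) mod (r0 + 1) + 2) mod (r0 + 1)"
      using next_reset[of e] assms(1) by auto
    moreover have "((x + 2 * t) mod (r0 + 1) + 2) mod (r0 + 1) = (x + 2 * Suc t) mod (r0 + 1)"
      using mod_add_left_eq[of "x + 2 * t" "r0 + 1" 2] by simp
    ultimately show ?case using e(1) by (intro exI[of _ e']) simp
  qed
  have "even (index_at e0)" using state_in_Q2[of e0] e0(1) assms(1) unfolding Q2_def by auto
  then have "even x" "x < r0 + 1" using x odd_r0 by (simp_all add: dvd_mod_iff)
  then have sum: "x + 2 * ((r0 + 1 - x + c) div 2) = (r0 + 1) + c"
    using assms(2) odd_r0 by (auto elim!: evenE oddE)
  have "c < r0 + 1" using assms(3) by simp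
  then have "((r0 + 1) + c) mod (r0 + 1) = c" by (metis mod_add_self1 mod_less)
  then show ?thesis using iterate sum by metis
qed

lemma obligation_trap:
  assumes \<pi>: "inf_path V j \<pi>" and const: "\<And>k. ranking_at (j + k) (\<pi> k) = c"
    and start: "index_at (j + k) = c" "\<pi> k \<in> obligation_at (j + k)"
  shows "index_at (j + k + d) = c \<and> \<pi> (k + d) \<in> obligation_at (j + k + d)"
proof (induction d)
  case 0 then show ?case using start by simp
next
  case (Suc d)
  let ?l = "j + k + d"
  have "j0 \<le> ?l" using inf_path_V_D[OF \<pi>, of "k + d"] by (simp add: add.assoc)
  moreover have "obligation_at ?l \<noteq> {}" using Suc by auto
  moreover have "\<pi> (k + Suc d) \<in> trans A (\<pi> (k + d)) (w ?l)" using \<pi> unfolding inf_path_def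
    by (simp add: add.assoc)
  moreover have "ranking_at (Suc ?l) (\<pi> (k + Suc d)) = c" using const[of "k + Suc d"]
    by (simp add: add.assoc)
  ultimately show ?case
    using Suc Q2_step(5,6)[OF is_Q2_from_j0] unfolding trans_set_def by auto
qed

text \<open>For even c, the path enters the obligation set when the index is reset to c and
  never leaves it, whereas the obligation set is empty infinitely often.\<close>
lemma const_ranking_path_odd:
  assumes \<pi>: "inf_path V j \<pi>" and const: "\<And>k. ranking_at (j + k) (\<pi> k) = c"
  shows "odd c"
proof
  assume "even c"
  have "j0 \<le> j" using inf_path_V_D[OF \<pi>, of 0] by simp
  have "c \<le> r0" using const[of 0] le_rank[of "ranking_at j" "\<pi> 0"] rank_ranking_at[OF \<open>j0 \<le> j\<close>]
    by simp
  then obtain e where e: "j \<le> e" "obligation_at e = {}" "index_at (Suc e) = c"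
    using reset_to_every_even_index \<open>j0 \<le> j\<close> \<open>even c\<close> by blast
  define k where "k = Suc e - j"
  have jk: "j + k = Suc e" using e(1) unfolding k_def by simp
  have "\<pi> k \<in> level (Suc e)" using inf_path_V_D[OF \<pi>, of k] jk by simp
  then have "\<pi> k \<in> obligation_at (j + k)"
    using Q2_step(4)[OF is_Q2_from_j0 e(2)] const[of k] e \<open>j0 \<le> j\<close> jk by simp
  then have "obligation_at (Suc e + d) \<noteq> {}" for d
    using obligation_trap[OF \<pi> const, of k d] e(3) jk by auto
  then show False using obligation_empty_infinitely[of "Suc e"] by (metis le_add_diff_inverse)
qed

lemma ranked_run_dag_ranking_at: "complete A \<Longrightarrow> ranked_run_dag A w j0 ranking_at"
proof unfold_locales
  have "tight (level j0) (ranking_at j0)" using state_in_Q2[of j0] unfolding Q2_def by auto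
  then have "1 \<in> ranking_at j0 ` level j0" using odd_r0 unfolding tight_def
    by (simp add: odd_pos Suc_leI)
  then show "level j0 \<noteq> {}" by auto
next
  fix j q q' assume "(j, q) \<in> V" "q' \<in> trans A q (w j)"
  then show "ranking_at (Suc j) q' \<le> ranking_at j q"
    using Q2_step(2)[OF is_Q2_from_j0] unfolding V_def by blast
next
  fix j q assume "j0 \<le> j"
  then show "q \<in> acc A \<Longrightarrow> even (ranking_at j q)" and "ranking_at j q \<le> 2 * card (UNIV :: 'q set)"
    using state_in_Q2[of j] unfolding Q2_def tight_rankings_def is_ranking_def by auto
qed (use const_ranking_path_odd in auto)

lemma Q2_run_accepted:
  assumes "complete A"
  shows "w \<in> lang (schewe_de A)"
proof -
  interpret ranked_run_dag A w j0 ranking_at using ranked_run_dag_ranking_at assms .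
  obtain r where
    "\<forall>\<^sub>F j in sequentially. tight (level j) (level_ranking j) \<and> rank (level_ranking j) = r"
    using eventually_tight by blast
  then obtain N where
    "Suc j0 \<le> N" "\<forall>j\<ge>N. tight (level j) (level_ranking j) \<and> rank (level_ranking j) = r"
    using eventually_sequentially_from by blast
  then interpret tight_ranked_run_dag A w j0 ranking_at r N by unfold_locales auto
  show ?thesis by (rule word_in_lang_schewe_de)
qed

end

theorem lemma3:
  fixes A :: "('q::finite, 'a::finite) ba"
  assumes "complete A"
  shows "lang (schewe_de A) = lang (schewe A)"
proof
  show "lang (schewe_de A) \<subseteq> lang (schewe A)"
    unfolding schewe_de_def schewe_def Q2_de_def by (rule lang_schewe_gen_mono) blast
next
  show "lang (schewe A) \<subseteq> lang (schewe_de A)"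
  proof
    fix w assume "w \<in> lang (schewe A)"
    then obtain \<rho> where "is_run (schewe A) (Q1st (init A)) w \<rho>" "accepting_run (schewe A) \<rho>"
      unfolding lang_def schewe_def schewe_gen_def by auto
    then interpret schewe_run A w \<rho> by unfold_locales
    show "w \<in> lang (schewe_de A)"
    proof (cases "\<exists>j0. is_Q2 (\<rho> j0)")
      case True
      then obtain j0 where "is_Q2 (\<rho> j0)" by blast
      then interpret schewe_run_Q2 A w \<rho> j0 by unfold_locales
      show ?thesis using Q2_run_accepted assms .
    qed (use Q1_run_accepted in \<open>auto simp: schewe_de_def\<close>)
  qed
qed

end
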